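(* Let $n\ge1$ and let $R$ be a uniformly random subset of $[n]$ (each element included independently with probability $1/2$). Consider any (possibly randomized, adaptive) algorithm which accesses the unknown set $R$ only through subgradient queries: in each query it chooses a permutation $P$ of $[n]$ (depending on its randomness and all previous answers) and receives the vector $g^{R,P}\in\mathbb{R}^n$ with $g^{R,P}_{P_k}=f_R(P[k])-f_R(P[k-1])$ for $k\in[n]$; and which, for every $R\subseteq[n]$, always terminates and outputs $R$ (the unique minimizer of $f_R$). Then the expected number of queries made by the algorithm (over the randomness of $R$ and of the algorithm) is at least $n/4$.
   Context: For a permutation $P=(P_1,\dots,P_n)$ of $[n]=\{1,\dots,n\}$, $P[m]=\{P_1,\dots,P_m\}$ (with $P[0]=\emptyset$). For $R\subseteq[n]$, the function $f_R:2^{[n]}\to\{-1,0,1\}$ is defined by $f_R(S)=-1$ if $S=R$; $f_R(S)=0$ if $S\subsetneq R$ or $R\subsetneq S$; and $f_R(S)=1$ otherwise. The vector $g^{R,P}$ is the Lovász-extension subgradient of $f_R$ at any point whose consistent sorted order is $P$. *)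

theory Defs
  imports "HOL-Probability.Probability"
begin

definition fR :: "nat set \<Rightarrow> nat set \<Rightarrow> real" where
  "fR R S = (if S = R then -1 else if S \<subset> R \<or> R \<subset> S then 0 else 1)"

definition is_perm :: "nat \<Rightarrow> nat list \<Rightarrow> bool" where
  "is_perm n P \<longleftrightarrow> distinct P \<and> set P = {1..n}"

definition pref :: "nat list \<Rightarrow> nat \<Rightarrow> nat set" where
  "pref P m = set (take m P)"

text \<open>The subgradient vector g^{R,P}, a vector indexed by [n] (value 0 outside the
  entries of P): g_{P_k} = f_R(P[k]) - f_R(P[k-1]); here k is the 0-based position,
  so P ! k = P_{k+1} and pref P (k+1) = P[k+1].\<close>
definition gvec :: "nat set \<Rightarrow> nat list \<Rightarrow> nat \<Rightarrow> real" where
  "gvec R P i = (if i \<in> set P then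
       (let k = (THE k. k < length P \<and> P ! k = i) in
          fR R (pref P (Suc k)) - fR R (pref P k)) else 0)"

datatype action = Query "nat list" | Output "nat set"

text \<open>A deterministic adaptive algorithm maps the history of answers received so far
  to its next action. hist A R k = the list of answers after k steps when run against R.\<close>
type_synonym det_alg = "(nat \<Rightarrow> real) list \<Rightarrow> action"

fun hist :: "det_alg \<Rightarrow> nat set \<Rightarrow> nat \<Rightarrow> (nat \<Rightarrow> real) list" where
  "hist A R 0 = []"
| "hist A R (Suc k) = (case A (hist A R k) of
      Query P \<Rightarrow> hist A R k @ [gvec R P]
    | Output S \<Rightarrow> hist A R k)"

definition num_queries :: "det_alg \<Rightarrow> nat set \<Rightarrow> nat" where
  "num_queries A R = (LEAST k. \<exists>S. A (hist A R k) = Output S)"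

definition correct_alg :: "nat \<Rightarrow> det_alg \<Rightarrow> bool" where
  "correct_alg n A \<longleftrightarrow> (\<forall>R. R \<subseteq> {1..n} \<longrightarrow>
      (\<exists>k S. A (hist A R k) = Output S)
    \<and> (\<forall>k P. A (hist A R k) = Query P \<longrightarrow> is_perm n P)
    \<and> (\<forall>k S. A (hist A R k) = Output S \<longrightarrow> S = R))"

end

theory Submission
  imports Defs
begin

text \<open>
  The answer g^{R,P} depends on R only through R \<inter> revealed R P, where revealed R P consists
  of the longest prefix of P inside R together with the next element, and the longest suffix of P
  disjoint from R together with the preceding element: f_R(P[k]) is determined by whether
  P[k] \<subseteq> R and whether R \<subseteq> P[k]. Accumulating these sets over the queries asked gives a known
  set K; instances that agree on K produce identical runs, so a correct algorithm can only halt
  once K = [n]. Conditioned on R \<inter> K, the set R is uniform on the unknown coordinates, so the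
  prefix part of a query reveals at most \<Sum>j 2^-j \<le> 2 new elements in expectation, and likewise
  the suffix part. Hence the expected size of K grows by at most 4 per query, which gives
  n \<le> 4 E[#queries] for every deterministic algorithm, and so for every mixture of them.
\<close>

lemma ball_set_take_iff_le_length_takeWhile:
  "m \<le> length xs \<Longrightarrow> (\<forall>x\<in>set (take m xs). p x) \<longleftrightarrow> m \<le> length (takeWhile p xs)"
proof (induction xs arbitrary: m)
  case (Cons a xs)
  then show ?case by (cases m) auto
qed simp

lemma takeWhile_eq_if_agree_through_first_failure:
  "\<forall>x\<in>set (take (Suc (length (takeWhile p xs))) xs). p x = q x \<Longrightarrow>
    takeWhile q xs = takeWhile p xs"
  by (induction xs) auto

definition front_run :: "'a set \<Rightarrow> 'a list \<Rightarrow> nat" where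
  "front_run R P = length (takeWhile (\<lambda>x. x \<in> R) P)"

definition back_run :: "'a set \<Rightarrow> 'a list \<Rightarrow> nat" where
  "back_run R P = length (takeWhile (\<lambda>x. x \<notin> R) (rev P))"

definition revealed_front :: "'a set \<Rightarrow> 'a list \<Rightarrow> 'a set" where
  "revealed_front R P = set (take (Suc (front_run R P)) P)"

definition revealed_back :: "'a set \<Rightarrow> 'a list \<Rightarrow> 'a set" where
  "revealed_back R P = set (take (Suc (back_run R P)) (rev P))"

definition revealed :: "'a set \<Rightarrow> 'a list \<Rightarrow> 'a set" where
  "revealed R P = revealed_front R P \<union> revealed_back R P"

lemma revealed_subset: "revealed R P \<subseteq> set P"
  unfolding revealed_def revealed_front_def revealed_back_def using set_take_subset by fastforce

lemma set_take_subset_iff_le_front_run: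
  "k \<le> length P \<Longrightarrow> set (take k P) \<subseteq> R \<longleftrightarrow> k \<le> front_run R P"
  using ball_set_take_iff_le_length_takeWhile[of k P "\<lambda>x. x \<in> R"] unfolding front_run_def by blast

lemma subset_set_take_iff_back_run_le:
  assumes "k \<le> length P" "distinct P" "R \<subseteq> set P"
  shows "R \<subseteq> set (take k P) \<longleftrightarrow> length P - back_run R P \<le> k"
proof -
  have "set P = set (take k P) \<union> set (drop k P)"
    by (metis append_take_drop_id set_append)
  moreover have "set (take k P) \<inter> set (drop k P) = {}"
    using assms(2) by (metis append_take_drop_id distinct_append)
  ultimately have "R \<subseteq> set (take k P) \<longleftrightarrow> (\<forall>x\<in>set (drop k P). x \<notin> R)"
    using assms(3) by blast
  also have "set (drop k P) = set (take (length P - k) (rev P))"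
    using assms(1) by (simp add: take_rev)
  also have "(\<forall>x\<in>set (take (length P - k) (rev P)). x \<notin> R) \<longleftrightarrow> length P - k \<le> back_run R P"
    using ball_set_take_iff_le_length_takeWhile[of "length P - k" "rev P" "\<lambda>x. x \<notin> R"]
    unfolding back_run_def by simp
  finally show ?thesis using assms(1) by linarith
qed

lemma runs_eq_if_agree_on_revealed:
  assumes "R \<inter> revealed R P = R' \<inter> revealed R P"
  shows "front_run R' P = front_run R P" "back_run R' P = back_run R P"
proof -
  have "\<forall>x\<in>set (take (Suc (length (takeWhile (\<lambda>x. x \<in> R) P))) P). (x \<in> R) = (x \<in> R')"
    using assms unfolding revealed_def revealed_front_def front_run_def by blast
  from takeWhile_eq_if_agree_through_first_failure[OF this]
  show "front_run R' P = front_run R P" unfolding front_run_def by simp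
  have "\<forall>x\<in>set (take (Suc (length (takeWhile (\<lambda>x. x \<notin> R) (rev P)))) (rev P)). (x \<notin> R) = (x \<notin> R')"
    using assms unfolding revealed_def revealed_back_def back_run_def by blast
  from takeWhile_eq_if_agree_through_first_failure[OF this]
  show "back_run R' P = back_run R P" unfolding back_run_def by simp
qed

lemma revealed_eq_if_agree_on_revealed:
  assumes "R \<inter> revealed R P = R' \<inter> revealed R P"
  shows "revealed R' P = revealed R P"
  using runs_eq_if_agree_on_revealed[OF assms]
  unfolding revealed_def revealed_front_def revealed_back_def by simp

lemma fR_eq_cases:
  "fR R X = (if X \<subseteq> R \<and> R \<subseteq> X then -1 else if X \<subseteq> R \<or> R \<subseteq> X then 0 else 1)"
  unfolding fR_def by auto

lemma gvec_eq_if_agree_on_revealed: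
  assumes agree: "R \<inter> revealed R P = R' \<inter> revealed R P"
    and P: "distinct P" "R \<subseteq> set P" "R' \<subseteq> set P"
  shows "gvec R P = gvec R' P"
proof -
  have "fR R (pref P m) = fR R' (pref P m)" for m
  proof -
    define k where "k = min m (length P)"
    have k: "k \<le> length P" unfolding k_def by simp
    have "pref P m = set (take k P)" unfolding pref_def k_def by (simp add: min_def)
    then show ?thesis
      unfolding fR_eq_cases
      using set_take_subset_iff_le_front_run[OF k] subset_set_take_iff_back_run_le[OF k P(1)]
        P runs_eq_if_agree_on_revealed[OF agree] by simp
  qed
  then show ?thesis unfolding gvec_def by (intro ext) (simp add: Let_def)
qed

text \<open>A sum over cylinder V K S divided by its cardinality is a conditional expectation for
  a uniformly random R \<subseteq> V given R \<inter> K = S \<inter> K.\<close>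

definition cylinder :: "'a set \<Rightarrow> 'a set \<Rightarrow> 'a set \<Rightarrow> 'a set set" where
  "cylinder V K S = {R. R \<subseteq> V \<and> R \<inter> K = S \<inter> K}"

lemma finite_cylinder: "finite V \<Longrightarrow> finite (cylinder V K S)"
  unfolding cylinder_def by (simp add: finite_subset)

lemma card_cylinder:
  assumes "finite V" "K \<subseteq> V"
  shows "card (cylinder V K S) = 2 ^ card (V - K)"
proof -
  have "cylinder V K S = (\<lambda>T. T \<union> (S \<inter> K)) ` Pow (V - K)"
    using assms(2) unfolding cylinder_def by (auto intro!: image_eqI[where x = "_ - K"])
  moreover have "inj_on (\<lambda>T. T \<union> (S \<inter> K)) (Pow (V - K))"
    by (rule inj_onI) blast
  ultimately show ?thesis using assms by (simp add: card_image card_Pow)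
qed

lemma card_cylinder_supset:
  assumes "finite V" "K \<subseteq> V" "B \<subseteq> V"
  shows "real (card {R \<in> cylinder V K S. B \<subseteq> R}) \<le> real (card (cylinder V K S)) / 2 ^ card (B - K)"
proof -
  have "{R \<in> cylinder V K S. B \<subseteq> R} \<subseteq> (\<lambda>T. T \<union> (S \<inter> K) \<union> (B - K)) ` Pow (V - K - B)"
    unfolding cylinder_def by (auto intro!: image_eqI[where x = "_ - K - B"])
  then have "card {R \<in> cylinder V K S. B \<subseteq> R} \<le> card (Pow (V - K - B))"
    using assms(1) by (meson card_image_le card_mono finite_Diff finite_Pow_iff finite_imageI order_trans)
  also have "V - K - B = (V - K) - (B - K)" by blast
  also have "card (Pow \<dots>) = 2 ^ (card (V - K) - card (B - K))"
    using assms by (simp add: card_Pow card_Diff_subset finite_subset Diff_mono)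
  finally have "real (card {R \<in> cylinder V K S. B \<subseteq> R}) \<le> 2 ^ (card (V - K) - card (B - K))"
    by (metis of_nat_le_iff of_nat_numeral of_nat_power)
  also have "\<dots> = 2 ^ card (V - K) / 2 ^ card (B - K)"
    using assms by (simp add: power_diff card_mono Diff_mono)
  finally show ?thesis using card_cylinder[OF assms(1,2)] by simp
qed

lemma sum_power_half_le_2:
  assumes "finite S"
  shows "(\<Sum>r\<in>S. (1/2::real) ^ r) \<le> 2"
proof -
  obtain N where "S \<subseteq> {..<N}" using assms finite_nat_bounded by blast
  then have "(\<Sum>r\<in>S. (1/2::real) ^ r) \<le> (\<Sum>r<N. (1/2) ^ r)"
    by (intro sum_mono2) auto
  also have "\<dots> = 2 - 2 * (1/2) ^ N" by (simp add: sum_gp_strict)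
  also have "\<dots> \<le> 2" by simp
  finally show ?thesis .
qed

lemma inj_on_card_set_take_Diff:
  assumes "distinct P"
  shows "inj_on (\<lambda>j. card (set (take j P) - K)) {j. j < length P \<and> P ! j \<notin> K}"
proof -
  have "card (set (take i P) - K) < card (set (take j P) - K)"
    if "i < j" "j < length P" "P ! i \<notin> K" for i j
  proof (rule psubset_card_mono)
    have "P ! i \<in> set (take j P) - K" using that by (auto simp: in_set_conv_nth)
    moreover have "P ! i \<notin> set (take i P)"
      using assms that by (auto simp: in_set_conv_nth nth_eq_iff_index_eq)
    ultimately show "set (take i P) - K \<subset> set (take j P) - K"
      using set_take_subset_set_take[of i j P] that by auto
  qed simp
  then show ?thesis by (intro inj_onI) (metis (no_types, lifting) linorder_cases mem_Collect_eq less_irrefl)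
qed

lemma card_revealed_front_Diff_le:
  "card (revealed_front R P - K) \<le> card {j. j < length P \<and> P ! j \<notin> K \<and> set (take j P) \<subseteq> R}"
proof -
  have "revealed_front R P - K \<subseteq> (!) P ` {j. j < length P \<and> P ! j \<notin> K \<and> set (take j P) \<subseteq> R}"
    (is "_ \<subseteq> _ ` ?J")
  proof
    fix x assume x: "x \<in> revealed_front R P - K"
    then obtain j where j: "j < length P" "j \<le> front_run R P" "P ! j = x"
      unfolding revealed_front_def by (auto simp: in_set_conv_nth)
    then have "set (take j P) \<subseteq> R" using set_take_subset_iff_le_front_run[of j P R] by simp
    with j x show "x \<in> (!) P ` ?J" by auto
  qed
  then have "card (revealed_front R P - K) \<le> card ((!) P ` ?J)"
    by (rule card_mono[rotated]) simp
  also have "\<dots> \<le> card ?J" by (rule card_image_le) simp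
  finally show ?thesis .
qed

lemma sum_card_revealed_front_Diff:
  assumes P: "distinct P" and K: "K \<subseteq> set P"
  shows "(\<Sum>R\<in>cylinder (set P) K S. real (card (revealed_front R P - K)))
    \<le> 2 * real (card (cylinder (set P) K S))"
proof -
  define C where "C = cylinder (set P) K S"
  define J where "J = {j. j < length P \<and> P ! j \<notin> K}"
  define g where "g j = card (set (take j P) - K)" for j
  have finite: "finite C" "finite J" unfolding C_def J_def by (simp_all add: finite_cylinder)
  have "(\<Sum>R\<in>C. real (card (revealed_front R P - K))) \<le> (\<Sum>R\<in>C. real (card {j \<in> J. set (take j P) \<subseteq> R}))"
    using card_revealed_front_Diff_le unfolding J_def by (intro sum_mono) (simp add: conj_assoc)
  also have "\<dots> = (\<Sum>j\<in>J. real (card {R \<in> C. set (take j P) \<subseteq> R}))"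
    using sum.swap_restrict[OF finite, of "\<lambda>_ _. 1::real"] by simp
  also have "\<dots> \<le> (\<Sum>j\<in>J. real (card C) * (1/2) ^ g j)"
    using card_cylinder_supset[OF _ K set_take_subset, of S] unfolding C_def g_def
    by (intro sum_mono) (simp add: power_one_over)
  also have "\<dots> = real (card C) * (\<Sum>r\<in>g ` J. (1/2) ^ r)"
    using inj_on_card_set_take_Diff[OF P, of K]
    by (simp add: sum_distrib_left sum.reindex J_def g_def)
  also have "\<dots> \<le> real (card C) * 2"
    using sum_power_half_le_2 finite(2) by (intro mult_left_mono) auto
  finally show ?thesis unfolding C_def by simp
qed

lemma revealed_back_eq_revealed_front_rev:
  assumes "R \<subseteq> set P"
  shows "revealed_back R P = revealed_front (set P - R) (rev P)"
proof -
  have "takeWhile (\<lambda>x. x \<notin> R) (rev P) = takeWhile (\<lambda>x. x \<in> set P - R) (rev P)"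
    by (rule takeWhile_cong) auto
  then show ?thesis
    unfolding revealed_back_def revealed_front_def back_run_def front_run_def by simp
qed

lemma cylinder_complement:
  assumes "K \<subseteq> V"
  shows "cylinder V K (V - S) = (\<lambda>R. V - R) ` cylinder V K S"
  using assms unfolding cylinder_def by (auto intro!: image_eqI[where x = "V - _"])

lemma sum_card_revealed_back_Diff:
  assumes P: "distinct P" and K: "K \<subseteq> set P"
  shows "(\<Sum>R\<in>cylinder (set P) K S. real (card (revealed_back R P - K)))
    \<le> 2 * real (card (cylinder (set P) K S))"
proof -
  define V where "V = set P"
  have inj: "inj_on (\<lambda>R. V - R) (cylinder V K S)"
    unfolding cylinder_def by (rule inj_onI) auto
  have "(\<Sum>R\<in>cylinder V K S. real (card (revealed_back R P - K)))
      = (\<Sum>R\<in>cylinder V K S. real (card (revealed_front (V - R) (rev P) - K)))"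
    unfolding cylinder_def V_def by (intro sum.cong refl) (simp add: revealed_back_eq_revealed_front_rev)
  also have "\<dots> = (\<Sum>R\<in>(\<lambda>R. V - R) ` cylinder V K S. real (card (revealed_front R (rev P) - K)))"
    by (simp add: sum.reindex[OF inj])
  also have "\<dots> = (\<Sum>R\<in>cylinder V K (V - S). real (card (revealed_front R (rev P) - K)))"
    unfolding cylinder_complement[OF K[folded V_def]] ..
  also have "\<dots> \<le> 2 * real (card (cylinder V K (V - S)))"
    using sum_card_revealed_front_Diff[of "rev P" K "V - S"] P K unfolding V_def by simp
  also have "card (cylinder V K (V - S)) = card (cylinder V K S)"
    unfolding cylinder_complement[OF K[folded V_def]] by (rule card_image[OF inj])
  finally show ?thesis unfolding V_def .
qed

lemma sum_card_revealed_Diff: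
  assumes "distinct P" "K \<subseteq> set P"
  shows "(\<Sum>R\<in>cylinder (set P) K S. real (card (revealed R P - K)))
    \<le> 4 * real (card (cylinder (set P) K S))"
proof -
  have "card (revealed R P - K) \<le> card (revealed_front R P - K) + card (revealed_back R P - K)" for R
    unfolding revealed_def Un_Diff by (rule card_Un_le)
  then have "(\<Sum>R\<in>cylinder (set P) K S. real (card (revealed R P - K)))
      \<le> (\<Sum>R\<in>cylinder (set P) K S. real (card (revealed_front R P - K)) + real (card (revealed_back R P - K)))"
    by (intro sum_mono) (metis of_nat_add of_nat_le_iff)
  then show ?thesis
    using sum_card_revealed_front_Diff[OF assms, of S] sum_card_revealed_back_Diff[OF assms, of S]
    by (simp add: sum.distrib)
qed

lemma sum_eq_sum_class_averages:
  fixes f :: "'a \<Rightarrow> real"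
  assumes "finite X"
    and C: "\<And>x. x \<in> X \<Longrightarrow> x \<in> C x" "\<And>x. x \<in> X \<Longrightarrow> C x \<subseteq> X"
      "\<And>x y. x \<in> X \<Longrightarrow> y \<in> C x \<Longrightarrow> C y = C x"
  shows "(\<Sum>x\<in>X. f x) = (\<Sum>x\<in>X. (\<Sum>y\<in>C x. f y) / real (card (C x)))"
proof -
  have restrict: "{y \<in> X. y \<in> C x} = C x" if "x \<in> X" for x
    using C(2)[OF that] by blast
  have flip: "{x \<in> X. y \<in> C x} = C y" if "y \<in> X" for y
    using C that by blast
  have "(\<Sum>x\<in>X. (\<Sum>y\<in>C x. f y) / real (card (C x)))
      = (\<Sum>x\<in>X. \<Sum>y\<in>{y \<in> X. y \<in> C x}. f y / real (card (C y)))"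
    using C(3) restrict by (simp add: sum_divide_distrib)
  also have "\<dots> = (\<Sum>y\<in>X. \<Sum>x\<in>{x \<in> X. y \<in> C x}. f y / real (card (C y)))"
    by (rule sum.swap_restrict[OF \<open>finite X\<close> \<open>finite X\<close>])
  also have "\<dots> = (\<Sum>y\<in>X. f y)"
  proof (intro sum.cong refl)
    fix y assume "y \<in> X"
    then have "card (C y) > 0"
      using C(1,2) \<open>finite X\<close> by (metis card_gt_0_iff empty_iff finite_subset)
    then show "(\<Sum>x\<in>{x \<in> X. y \<in> C x}. f y / real (card (C y))) = f y"
      using flip[OF \<open>y \<in> X\<close>] by simp
  qed
  finally show ?thesis ..
qed

fun known :: "det_alg \<Rightarrow> nat set \<Rightarrow> nat \<Rightarrow> nat set" where
  "known A R 0 = {}"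
| "known A R (Suc t) = (case A (hist A R t) of
      Query P \<Rightarrow> known A R t \<union> revealed R P
    | Output S \<Rightarrow> known A R t)"

definition newly_revealed :: "det_alg \<Rightarrow> nat set \<Rightarrow> nat \<Rightarrow> nat set" where
  "newly_revealed A R t = (case A (hist A R t) of
      Query P \<Rightarrow> revealed R P - known A R t
    | Output S \<Rightarrow> {})"

lemma known_Suc_eq: "known A R (Suc t) = known A R t \<union> newly_revealed A R t"
  unfolding newly_revealed_def by (auto split: action.split)

lemma correct_alg_QueryD:
  "correct_alg n A \<Longrightarrow> R \<subseteq> {1..n} \<Longrightarrow> A (hist A R t) = Query P \<Longrightarrow> distinct P \<and> set P = {1..n}"
  unfolding correct_alg_def is_perm_def by blast

lemma correct_alg_OutputD:
  "correct_alg n A \<Longrightarrow> R \<subseteq> {1..n} \<Longrightarrow> A (hist A R t) = Output S \<Longrightarrow> S = R"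
  unfolding correct_alg_def by blast

lemma known_subset:
  assumes A: "correct_alg n A" and R: "R \<subseteq> {1..n}"
  shows "known A R t \<subseteq> {1..n}"
proof (induction t)
  case (Suc t)
  show ?case
  proof (cases "A (hist A R t)")
    case (Query P)
    then show ?thesis using Suc revealed_subset[of R P] correct_alg_QueryD[OF A R Query] by auto
  qed (use Suc in simp)
qed simp

lemma run_eq_on_cylinder_known:
  assumes A: "correct_alg n A" and R: "R \<subseteq> {1..n}"
  shows "R' \<in> cylinder {1..n} (known A R t) R \<Longrightarrow>
    hist A R' t = hist A R t \<and> known A R' t = known A R t"
proof (induction t)
  case (Suc t)
  then have R': "R' \<subseteq> {1..n}" and agree: "R \<inter> known A R (Suc t) = R' \<inter> known A R (Suc t)"
    unfolding cylinder_def by auto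
  then have "R' \<in> cylinder {1..n} (known A R t) R"
    unfolding cylinder_def known_Suc_eq by blast
  with Suc.IH have IH: "hist A R' t = hist A R t" "known A R' t = known A R t" by auto
  show ?case
  proof (cases "A (hist A R t)")
    case (Query P)
    have agree_P: "R \<inter> revealed R P = R' \<inter> revealed R P" using agree Query by auto
    have "gvec R P = gvec R' P"
      using gvec_eq_if_agree_on_revealed[OF agree_P] correct_alg_QueryD[OF A R Query] R R' by auto
    then show ?thesis using Query IH revealed_eq_if_agree_on_revealed[OF agree_P] by simp
  next
    case (Output S)
    then show ?thesis using IH by simp
  qed
qed simp

lemma Output_at_num_queries:
  assumes "correct_alg n A" "R \<subseteq> {1..n}"
  obtains S where "A (hist A R (num_queries A R)) = Output S"
proof -
  have "\<exists>k S. A (hist A R k) = Output S" using assms unfolding correct_alg_def by blast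
  then have "\<exists>S. A (hist A R (num_queries A R)) = Output S"
    unfolding num_queries_def by (rule LeastI_ex)
  then show ?thesis using that by blast
qed

lemma run_stable_after_Output:
  assumes "A (hist A R N) = Output S" "N \<le> m"
  shows "hist A R m = hist A R N \<and> known A R m = known A R N"
  using assms(2) by (induction m rule: dec_induct) (use assms(1) in simp_all)

lemma less_num_queries_if_Query:
  assumes A: "correct_alg n A" and R: "R \<subseteq> {1..n}" and Query: "A (hist A R t) = Query P"
  shows "t < num_queries A R"
proof (rule ccontr)
  obtain S where "A (hist A R (num_queries A R)) = Output S"
    using Output_at_num_queries[OF A R] .
  moreover assume "\<not> t < num_queries A R"
  ultimately show False using run_stable_after_Output[of A R _ S t] Query by auto
qed

lemma known_num_queries:
  assumes A: "correct_alg n A" and R: "R \<subseteq> {1..n}"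
  shows "known A R (num_queries A R) = {1..n}"
proof (rule ccontr)
  define N where "N = num_queries A R"
  obtain S where S: "A (hist A R N) = Output S" using Output_at_num_queries[OF A R] N_def by auto
  assume "known A R (num_queries A R) \<noteq> {1..n}"
  then obtain i where i: "i \<in> {1..n}" "i \<notin> known A R N" using known_subset[OF A R] N_def by blast
  define R' where "R' = (if i \<in> R then R - {i} else insert i R)"
  have R': "R' \<in> cylinder {1..n} (known A R N) R" using R i unfolding R'_def cylinder_def by auto
  then have "A (hist A R' N) = Output S" using run_eq_on_cylinder_known[OF A R] S by simp
  then have "S = R'" using correct_alg_OutputD[OF A] R' unfolding cylinder_def by blast
  moreover have "S = R" using correct_alg_OutputD[OF A R S] .
  ultimately show False unfolding R'_def by (auto split: if_splits)
qed

lemma sum_card_newly_revealed_on_cylinder: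
  assumes A: "correct_alg n A" and R: "R \<subseteq> {1..n}"
  shows "(\<Sum>R'\<in>cylinder {1..n} (known A R t) R. real (card (newly_revealed A R' t)))
    \<le> 4 * of_bool (t < num_queries A R) * real (card (cylinder {1..n} (known A R t) R))"
proof (cases "A (hist A R t)")
  case (Query P)
  have "newly_revealed A R' t = revealed R' P - known A R t"
    if "R' \<in> cylinder {1..n} (known A R t) R" for R'
    using run_eq_on_cylinder_known[OF A R that] Query unfolding newly_revealed_def by simp
  then have "(\<Sum>R'\<in>cylinder {1..n} (known A R t) R. real (card (newly_revealed A R' t)))
      = (\<Sum>R'\<in>cylinder {1..n} (known A R t) R. real (card (revealed R' P - known A R t)))"
    by (intro sum.cong refl) simp
  also have "\<dots> \<le> 4 * real (card (cylinder {1..n} (known A R t) R))"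
    using sum_card_revealed_Diff[of P "known A R t" R] correct_alg_QueryD[OF A R Query]
      known_subset[OF A R] by simp
  finally show ?thesis using less_num_queries_if_Query[OF A R Query] by simp
next
  case (Output S)
  then have "newly_revealed A R' t = {}" if "R' \<in> cylinder {1..n} (known A R t) R" for R'
    using run_eq_on_cylinder_known[OF A R that] unfolding newly_revealed_def by simp
  then show ?thesis by simp
qed

lemma sum_card_known_le:
  assumes A: "correct_alg n A"
  shows "(\<Sum>R\<in>Pow {1..n}. real (card (known A R t)))
    \<le> 4 * (\<Sum>R\<in>Pow {1..n}. real (min t (num_queries A R)))"
proof (induction t)
  case (Suc t)
  define X where "X = Pow {1..n}"
  define C where "C R = cylinder {1..n} (known A R t) R" for R
  have C: "R \<in> C R" "C R \<subseteq> X" "finite (C R)" if "R \<in> X" for R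
    using that finite_cylinder[of "{1..n}"] unfolding C_def X_def cylinder_def by auto
  have C_eq: "C R' = C R" if "R \<in> X" "R' \<in> C R" for R R'
  proof -
    have "known A R' t = known A R t" "R' \<inter> known A R t = R \<inter> known A R t"
      using run_eq_on_cylinder_known[OF A, of R R' t] that unfolding C_def X_def cylinder_def by auto
    then show ?thesis unfolding C_def cylinder_def by simp
  qed
  have "(\<Sum>R\<in>X. real (card (newly_revealed A R t)))
      = (\<Sum>R\<in>X. (\<Sum>R'\<in>C R. real (card (newly_revealed A R' t))) / real (card (C R)))"
    by (rule sum_eq_sum_class_averages[OF _ C(1,2) C_eq]) (simp add: X_def)
  also have "\<dots> \<le> (\<Sum>R\<in>X. 4 * of_bool (t < num_queries A R))"
  proof (rule sum_mono)
    fix R assume "R \<in> X"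
    then have "card (C R) > 0" using C card_gt_0_iff by blast
    then show "(\<Sum>R'\<in>C R. real (card (newly_revealed A R' t))) / real (card (C R))
        \<le> 4 * of_bool (t < num_queries A R)"
      using sum_card_newly_revealed_on_cylinder[OF A, of R t] \<open>R \<in> X\<close>
      unfolding C_def X_def by (simp add: divide_le_eq)
  qed
  finally have gain: "(\<Sum>R\<in>X. real (card (newly_revealed A R t)))
      \<le> 4 * (\<Sum>R\<in>X. of_bool (t < num_queries A R))"
    by (simp add: sum_distrib_left)
  have "(\<Sum>R\<in>X. real (card (known A R (Suc t))))
      \<le> (\<Sum>R\<in>X. real (card (known A R t))) + (\<Sum>R\<in>X. real (card (newly_revealed A R t)))"
    unfolding sum.distrib[symmetric] known_Suc_eq
    by (rule sum_mono) (metis card_Un_le of_nat_add of_nat_le_iff)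
  moreover have "(\<Sum>R\<in>X. real (min (Suc t) (num_queries A R)))
      = (\<Sum>R\<in>X. real (min t (num_queries A R))) + (\<Sum>R\<in>X. of_bool (t < num_queries A R))"
    unfolding sum.distrib[symmetric] by (intro sum.cong refl) (simp add: min_def)
  ultimately show ?case using Suc.IH gain unfolding X_def by linarith
qed simp

lemma sum_num_queries_ge:
  assumes A: "correct_alg n A"
  shows "real n * 2 ^ n \<le> 4 * (\<Sum>R\<in>Pow {1..n}. real (num_queries A R))"
proof -
  define T where "T = Max (num_queries A ` Pow {1..n})"
  have T: "num_queries A R \<le> T" if "R \<in> Pow {1..n}" for R
    unfolding T_def using that by (intro Max_ge) auto
  have "known A R T = {1..n}" if R: "R \<in> Pow {1..n}" for R
  proof -
    obtain S where S: "A (hist A R (num_queries A R)) = Output S"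
      using Output_at_num_queries[OF A] R by auto
    then show ?thesis
      using run_stable_after_Output[of A R _ S T, OF S T[OF R]] known_num_queries[OF A] R by simp
  qed
  then have "(\<Sum>R\<in>Pow {1..n}. real (card (known A R T))) = real n * 2 ^ n"
    by (simp add: card_Pow)
  moreover have "min T (num_queries A R) = num_queries A R" if "R \<in> Pow {1..n}" for R
    using T[OF that] by simp
  ultimately show ?thesis using sum_card_known_le[OF A, of T] by simp
qed

theorem theorem4p4:
  fixes n :: nat and M :: "'w measure" and alg :: "'w \<Rightarrow> det_alg"
  assumes "n \<ge> 1"
    and "prob_space M"
    and "\<And>\<omega>. \<omega> \<in> space M \<Longrightarrow> correct_alg n (alg \<omega>)"
    and "\<And>R. R \<subseteq> {1..n} \<Longrightarrow>
           (\<lambda>\<omega>. num_queries (alg \<omega>) R) \<in> measurable M (count_space UNIV)"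
  shows "(\<integral>\<^sup>+ \<omega>. (\<Sum>R\<in>Pow {1..n}. ennreal (real (num_queries (alg \<omega>) R))) / 2 ^ n \<partial>M)
           \<ge> ennreal (real n / 4)"
proof -
  \<comment> \<open>The bound holds for every \<omega>.\<close>
  have "ennreal (real n / 4) \<le> (\<Sum>R\<in>Pow {1..n}. ennreal (real (num_queries (alg \<omega>) R))) / 2 ^ n"
    if "\<omega> \<in> space M" for \<omega>
  proof -
    have "(\<Sum>R\<in>Pow {1..n}. ennreal (real (num_queries (alg \<omega>) R))) / 2 ^ n
        = ennreal ((\<Sum>R\<in>Pow {1..n}. real (num_queries (alg \<omega>) R)) / 2 ^ n)"
      using ennreal_power[of 2 n] by (simp add: sum_nonneg divide_ennreal)
    moreover have "real n / 4 \<le> (\<Sum>R\<in>Pow {1..n}. real (num_queries (alg \<omega>) R)) / 2 ^ n"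
      using sum_num_queries_ge[OF assms(3)[OF that]] by (simp add: field_simps)
    ultimately show ?thesis by (simp add: ennreal_leI)
  qed
  then have "(\<integral>\<^sup>+ \<omega>. ennreal (real n / 4) \<partial>M)
      \<le> (\<integral>\<^sup>+ \<omega>. (\<Sum>R\<in>Pow {1..n}. ennreal (real (num_queries (alg \<omega>) R))) / 2 ^ n \<partial>M)"
    by (rule nn_integral_mono)
  then show ?thesis using prob_space.emeasure_space_1[OF assms(2)] by simp
qed

end
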